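(* Let $A\subset\mathcal R$ be a closed zone with $w(A)=w$. Then there exist a finite Puiseux series $p(y)=a_1y^{r_1}+\cdots+a_ny^{r_n}$ with $r_i$ positive rationals, $r_1<\cdots<r_n<\frac1w$, real numbers $c_1<c_2$, and two Puiseux series $$\alpha_1=p(y)+c_1y^{\frac1w}+\mathrm{h.o.t.}_{>\frac1w}\in A,\qquad \alpha_2=p(y)+c_2y^{\frac1w}+\mathrm{h.o.t.}_{>\frac1w}\in A.$$ Moreover, for every $c$ with $c_1<c<c_2$, every Puiseux series (arc in $\mathcal R$) of the form $\alpha=p(y)+cy^{\frac1w}+\mathrm{h.o.t.}_{>\frac1w}$ lies in $A$.
   Context: Let $\mathcal R$ be the set of germs at $0$ of analytic arcs $\{x=\alpha(y),\ y\ge 0\}$ in the closed upper half-plane of $\mathbb R^2$, where $\alpha$ is given by a convergent Puiseux series $\alpha(y)=\sum_i c_iy^{p_i}$ with positive rational exponents $p_1<p_2<\cdots$. The order $\mathcal O(\gamma)$ of a Puiseux series is the smallest exponent with nonzero coefficient ($\mathcal O(0)=+\infty$). Write $\alpha<\beta$ if $\alpha(y)<\beta(y)$ for all sufficiently small $y>0$. A subset $A\subset\mathcal R$ is a zone if $\alpha,\beta\in A$, $\alpha<\gamma<\beta$, $\gamma\in\mathcal R$ imply $\gamma\in A$. Distance $d(\alpha,\beta)=1/\mathcal O(\alpha-\beta)$ (with $1/\infty=0$); width $w(A)=\sup\{d(\alpha,\beta):\alpha,\beta\in A\}$. A zone is closed if there exist $\alpha,\beta\in A$ with $d(\alpha,\beta)=w(A)$,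 and open otherwise. $\mathrm{h.o.t.}_{>r}$ denotes a sum of nonzero terms of order strictly greater than $r$. *)

theory Defs
  imports "HOL-Analysis.Analysis"
begin

text \<open>A Puiseux series is represented by its coefficient function
  c :: rat => real (c q is the coefficient of y^q).  It is a convergent
  Puiseux series with positive rational exponents if there is a common
  denominator N > 0 such that all exponents with nonzero coefficient are of
  the form k/N with k >= 1 and the power series in t = y^(1/N) has positive
  radius of convergence.\<close>

definition puiseux_den :: "(rat \<Rightarrow> real) \<Rightarrow> nat \<Rightarrow> bool" where
  "puiseux_den c N \<longleftrightarrow> N > 0 \<and>
     (\<forall>q. c q \<noteq> 0 \<longrightarrow> q > 0 \<and> (\<exists>k::nat. q = of_nat k / of_nat N)) \<and>
     (\<exists>r::real. r > 0 \<and> summable (\<lambda>k. \<bar>c (of_nat k / of_nat N)\<bar> * r ^ k))"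

definition is_puiseux :: "(rat \<Rightarrow> real) \<Rightarrow> bool" where
  "is_puiseux c \<longleftrightarrow> (\<exists>N. puiseux_den c N)"

text \<open>The set R of arcs (germs), identified with their Puiseux series.\<close>
definition arcs :: "(rat \<Rightarrow> real) set" where
  "arcs = {c. is_puiseux c}"

definition puiseux_eval :: "(rat \<Rightarrow> real) \<Rightarrow> real \<Rightarrow> real" where
  "puiseux_eval c y = (\<Sum>\<^sub>\<infinity>q\<in>UNIV. c q * y powr (of_rat q))"

definition arc_less :: "(rat \<Rightarrow> real) \<Rightarrow> (rat \<Rightarrow> real) \<Rightarrow> bool" where
  "arc_less a b \<longleftrightarrow> (\<exists>\<epsilon>>0. \<forall>y. 0 < y \<and> y < \<epsilon> \<longrightarrow> puiseux_eval a y < puiseux_eval b y)"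

definition puiseux_order :: "(rat \<Rightarrow> real) \<Rightarrow> real" where
  "puiseux_order c = Inf {of_rat q | q. c q \<noteq> 0}"

definition arc_dist :: "(rat \<Rightarrow> real) \<Rightarrow> (rat \<Rightarrow> real) \<Rightarrow> real" where
  "arc_dist a b = (if (\<forall>q. a q = b q) then 0 else 1 / puiseux_order (\<lambda>q. a q - b q))"

definition is_zone :: "(rat \<Rightarrow> real) set \<Rightarrow> bool" where
  "is_zone A \<longleftrightarrow> A \<subseteq> arcs \<and>
     (\<forall>a b g. a \<in> A \<longrightarrow> b \<in> A \<longrightarrow> g \<in> arcs \<longrightarrow> arc_less a g \<longrightarrow> arc_less g b \<longrightarrow> g \<in> A)"

definition zone_width :: "(rat \<Rightarrow> real) set \<Rightarrow> ereal" where
  "zone_width A = Sup {ereal (arc_dist a b) | a b. a \<in> A \<and> b \<in> A}"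

definition closed_zone :: "(rat \<Rightarrow> real) set \<Rightarrow> bool" where
  "closed_zone A \<longleftrightarrow> is_zone A \<and> (\<exists>a\<in>A. \<exists>b\<in>A. ereal (arc_dist a b) = zone_width A)"

end

theory Submission
  imports Defs
begin

text \<open>Take arcs a, b in A at distance w; their first differing exponent is q0 = 1/w, and the
  common truncation of a and b below q0 is the polynomial p. An arc that agrees with p below q0
  and whose coefficient at q0 lies strictly between those of a and b is squeezed between a and b
  for small y > 0: since all exponents of a Puiseux series lie in (1/N)\<nat>, the terms above q0
  start at some exponent q1 > q0, so their sum is O(y^q1) and the term at y^q0 decides the order.
  Convexity of the zone then puts the arc into A.\<close>

lemma arc_less_iff_eventually:
  "arc_less a b \<longleftrightarrow> (\<forall>\<^sub>F y in at_right 0. puiseux_eval a y < puiseux_eval b y)"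
  unfolding arc_less_def eventually_at_right_field by auto

lemma puiseux_den_support:
  assumes "puiseux_den c N" "c q \<noteq> 0"
  shows "0 < q" "\<exists>k::nat. q = of_nat k / of_nat N"
  using assms unfolding puiseux_den_def by auto

lemma powr_of_rat_nat_div:
  fixes r :: real
  assumes "r > 0" "N > 0"
  shows "(r ^ N) powr of_rat (of_nat k / of_nat N) = r ^ k"
proof -
  have "(r ^ N) powr of_rat (of_nat k / of_nat N) = (r powr real N) powr (real k / real N)"
    using assms by (simp add: powr_realpow of_rat_divide)
  also have "\<dots> = r powr (real N * (real k / real N))"
    by (simp add: powr_powr)
  also have "\<dots> = r ^ k"
    using assms by (simp add: powr_realpow)
  finally show ?thesis .
qed

lemma puiseux_den_abs_summable_on:
  assumes "puiseux_den c N"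
  obtains R :: real where "R > 0" "(\<lambda>q. \<bar>c q\<bar> * R powr of_rat q) summable_on UNIV"
proof -
  obtain r :: real where r: "r > 0" and sr: "summable (\<lambda>k. \<bar>c (of_nat k / of_nat N)\<bar> * r ^ k)"
    and N: "N > 0"
    using assms unfolding puiseux_den_def by blast
  define g where "g k = (of_nat k / of_nat N :: rat)" for k :: nat
  let ?F = "\<lambda>q. \<bar>c q\<bar> * (r ^ N) powr of_rat q"
  have "inj g"
    using N by (auto simp: g_def inj_def)
  moreover have "(?F \<circ> g) summable_on UNIV"
    using powr_of_rat_nat_div[OF r N] r sr
    by (auto simp: g_def o_def intro: norm_summable_imp_summable_on)
  ultimately have "?F summable_on range g"
    by (simp add: summable_on_reindex)
  moreover have "c q = 0" if "q \<notin> range g" for q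
    using puiseux_den_support(2)[OF assms] that by (auto simp: g_def)
  ultimately have "?F summable_on UNIV"
    by (subst summable_on_cong_neutral[where T = "range g" and g = ?F]) auto
  then show ?thesis
    using r that[of "r ^ N"] by simp
qed

lemma puiseux_den_support_gap:
  assumes "puiseux_den c N"
  obtains q1 where "q0 < q1" "\<And>q. c q \<noteq> 0 \<Longrightarrow> q0 < q \<Longrightarrow> q1 \<le> q"
proof
  have N: "N > 0"
    using assms unfolding puiseux_den_def by simp
  define q1 :: rat where "q1 = of_int (\<lfloor>q0 * of_nat N\<rfloor> + 1) / of_nat N"
  have "q0 * of_nat N < of_int (\<lfloor>q0 * of_nat N\<rfloor> + 1)"
    by linarith
  then show "q0 < q1"
    using N by (simp add: q1_def field_simps)
  fix q assume "c q \<noteq> 0" "q0 < q"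
  then obtain k :: nat where k: "q = of_nat k / of_nat N"
    using puiseux_den_support(2)[OF assms] by blast
  with \<open>q0 < q\<close> N have "q0 * of_nat N < of_nat k"
    by (simp add: field_simps)
  then have "\<lfloor>q0 * of_nat N\<rfloor> + 1 \<le> int k"
    using floor_less_iff[of "q0 * of_nat N" "int k"] by simp
  then have "(of_int (\<lfloor>q0 * of_nat N\<rfloor> + 1) :: rat) \<le> of_nat k"
    by (metis of_int_le_iff of_int_of_nat_eq)
  then show "q1 \<le> q"
    using N k by (simp add: q1_def divide_right_mono)
qed

lemma puiseux_finite_support_below:
  assumes "is_puiseux c"
  shows "finite {q. c q \<noteq> 0 \<and> q < q0}"
proof -
  obtain N where den: "puiseux_den c N"
    using assms unfolding is_puiseux_def by blast
  then have N: "N > 0"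
    unfolding puiseux_den_def by simp
  have "{q. c q \<noteq> 0 \<and> q < q0} \<subseteq> (\<lambda>k. of_nat k / of_nat N) ` {..nat \<lceil>q0 * of_nat N\<rceil>}"
  proof
    fix q assume "q \<in> {q. c q \<noteq> 0 \<and> q < q0}"
    then obtain k :: nat where k: "q = of_nat k / of_nat N" and "q < q0" "c q \<noteq> 0"
      using puiseux_den_support(2)[OF den] by blast
    have "of_nat k = q * of_nat N"
      using k N by simp
    also have "\<dots> \<le> q0 * of_nat N"
      using \<open>q < q0\<close> by (simp add: mult_right_mono)
    finally have "of_nat k \<le> q0 * of_nat N" .
    then have "int k \<le> \<lceil>q0 * of_nat N\<rceil>"
      by (metis ceiling_mono ceiling_of_nat)
    then have "k \<le> nat \<lceil>q0 * of_nat N\<rceil>"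
      by linarith
    with k show "q \<in> (\<lambda>k. of_nat k / of_nat N) ` {..nat \<lceil>q0 * of_nat N\<rceil>}"
      by auto
  qed
  then show ?thesis
    by (rule finite_subset) simp
qed

lemma powr_le_scaled_powr:
  fixes y R :: real
  assumes "0 < y" "y \<le> R" "a \<le> b"
  shows "y powr b \<le> (y / R) powr a * R powr b"
proof -
  have "y powr b = (y / R) powr b * R powr b"
    using assms by (simp add: powr_divide)
  also have "\<dots> \<le> (y / R) powr a * R powr b"
    using assms by (intro mult_right_mono powr_mono') auto
  finally show ?thesis .
qed

lemma puiseux_abs_summable_on_smaller_radius:
  assumes "puiseux_den c N" "(\<lambda>q. \<bar>c q\<bar> * R powr of_rat q) summable_on UNIV" "0 < y" "y \<le> R"
  shows "(\<lambda>q. \<bar>c q\<bar> * y powr of_rat q) summable_on UNIV"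
proof (rule summable_on_comparison_test[OF assms(2)])
  fix q
  show "\<bar>c q\<bar> * y powr of_rat q \<le> \<bar>c q\<bar> * R powr of_rat q"
  proof (cases "c q = 0")
    case False
    then have "0 < q"
      by (rule puiseux_den_support(1)[OF assms(1)])
    with assms(3,4) show ?thesis
      by (intro mult_left_mono powr_mono2) auto
  qed simp
qed simp

lemma puiseux_tail_small:
  assumes "is_puiseux c" "\<epsilon> > 0"
  shows "\<forall>\<^sub>F y in at_right 0. (\<lambda>q. \<bar>c q\<bar> * y powr of_rat q) summable_on UNIV \<and>
           (\<Sum>\<^sub>\<infinity>q\<in>{q0<..}. \<bar>c q\<bar> * y powr of_rat q) \<le> \<epsilon> * y powr of_rat q0"
proof -
  obtain N where den: "puiseux_den c N"
    using assms(1) unfolding is_puiseux_def by blast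
  obtain R where "R > 0" and sum_R: "(\<lambda>q. \<bar>c q\<bar> * R powr of_rat q) summable_on UNIV"
    by (rule puiseux_den_abs_summable_on[OF den])
  obtain q1 where "q0 < q1" and gap: "\<And>q. c q \<noteq> 0 \<Longrightarrow> q0 < q \<Longrightarrow> q1 \<le> q"
    using puiseux_den_support_gap[OF den, of q0] by blast
  define S where "S = (\<Sum>\<^sub>\<infinity>q. \<bar>c q\<bar> * R powr of_rat q)"
  define s where "s = of_rat q1 - (of_rat q0 :: real)"
  have "s > 0"
    using \<open>q0 < q1\<close> by (simp add: s_def of_rat_less)
  have "((\<lambda>y. y powr s * (S / R powr of_rat q1)) \<longlongrightarrow> 0 * (S / R powr of_rat q1)) (at_right 0)"
    using \<open>s > 0\<close> eventually_at_right_less[of "0::real"]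
    by (intro tendsto_mult_right tendsto_zero_powrI tendsto_ident_at tendsto_const)
      (auto elim: eventually_mono)
  then have "\<forall>\<^sub>F y in at_right 0. y powr s * (S / R powr of_rat q1) < \<epsilon>"
    using assms(2) by (auto dest: order_tendstoD(2))
  moreover have "\<forall>\<^sub>F y in at_right 0. 0 < y \<and> y < R"
    using \<open>R > 0\<close> unfolding eventually_at_right_field by auto
  ultimately show ?thesis
  proof eventually_elim
    case (elim y)
    then have y: "0 < y" "y \<le> R"
      by auto
    let ?F = "\<lambda>q. \<bar>c q\<bar> * y powr of_rat q"
    have "?F summable_on UNIV"
      by (rule puiseux_abs_summable_on_smaller_radius[OF den sum_R y])
    then have "(\<Sum>\<^sub>\<infinity>q\<in>{q0<..}. ?F q) \<le> (\<Sum>\<^sub>\<infinity>q. (y / R) powr of_rat q1 * (\<bar>c q\<bar> * R powr of_rat q))"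
    proof (intro infsum_mono_neutral summable_on_cmult_right sum_R)
      fix q assume "q \<in> {q0<..} \<inter> UNIV"
      then show "?F q \<le> (y / R) powr of_rat q1 * (\<bar>c q\<bar> * R powr of_rat q)"
        using gap[of q] powr_le_scaled_powr[OF y, of "of_rat q1" "of_rat q"]
        by (cases "c q = 0") (auto simp: of_rat_less_eq mult.left_commute intro: mult_left_mono)
    qed (auto intro: summable_on_subset_banach)
    also have "\<dots> = (y / R) powr of_rat q1 * S"
      unfolding S_def by (rule infsum_cmult_right[OF sum_R])
    also have "\<dots> = y powr of_rat q0 * (y powr s * (S / R powr of_rat q1))"
      using y by (simp add: powr_divide s_def powr_add[symmetric])
    also have "\<dots> \<le> y powr of_rat q0 * \<epsilon>"
      using elim by (intro mult_left_mono) auto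
    finally show ?case
      using \<open>?F summable_on UNIV\<close> by (simp add: mult.commute)
  qed
qed

lemma puiseux_eval_leading_terms:
  assumes "is_puiseux c" "\<epsilon> > 0"
  shows "\<forall>\<^sub>F y in at_right 0.
           \<bar>puiseux_eval c y - (\<Sum>\<^sub>\<infinity>q\<in>{..<q0}. c q * y powr of_rat q) - c q0 * y powr of_rat q0\<bar>
             \<le> \<epsilon> * y powr of_rat q0"
  using puiseux_tail_small[OF assms, of q0] eventually_at_right_less[of "0::real"]
proof eventually_elim
  case (elim y)
  let ?f = "\<lambda>q. c q * y powr of_rat q"
  have norm_f: "norm (?f q) = \<bar>c q\<bar> * y powr of_rat q" for q
    by (simp add: abs_mult)
  then have "(\<lambda>q. norm (?f q)) summable_on UNIV"
    using elim by simp
  then have "?f summable_on UNIV"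
    by (rule summable_on_iff_abs_summable_on_real[THEN iffD2])
  then have summable: "?f summable_on B" for B
    using summable_on_subset_banach subset_UNIV by blast
  have "UNIV = {..<q0} \<union> insert q0 {q0<..}"
    by auto
  then have "puiseux_eval c y = (\<Sum>\<^sub>\<infinity>q\<in>{..<q0} \<union> insert q0 {q0<..}. ?f q)"
    by (simp add: puiseux_eval_def)
  also have "\<dots> = (\<Sum>\<^sub>\<infinity>q\<in>{..<q0}. ?f q) + (?f q0 + (\<Sum>\<^sub>\<infinity>q\<in>{q0<..}. ?f q))"
    using summable by (subst infsum_Un_disjoint) (auto simp: infsum_insert)
  finally have "puiseux_eval c y - (\<Sum>\<^sub>\<infinity>q\<in>{..<q0}. ?f q) - ?f q0 = (\<Sum>\<^sub>\<infinity>q\<in>{q0<..}. ?f q)"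
    by simp
  also have "\<bar>\<dots>\<bar> \<le> (\<Sum>\<^sub>\<infinity>q\<in>{q0<..}. norm (?f q))"
    using summable norm_infsum_bound summable_on_iff_abs_summable_on_real by (metis real_norm_def)
  also have "\<dots> \<le> \<epsilon> * y powr of_rat q0"
    using elim by (simp add: abs_mult)
  finally show ?case .
qed

lemma arc_less_if_first_difference_less:
  assumes "is_puiseux a" "is_puiseux b" "\<And>q. q < q0 \<Longrightarrow> a q = b q" "a q0 < b q0"
  shows "arc_less a b"
proof -
  define \<epsilon> where "\<epsilon> = (b q0 - a q0) / 3"
  have "\<epsilon> > 0"
    using assms(4) by (simp add: \<epsilon>_def)
  have same_head: "(\<Sum>\<^sub>\<infinity>q\<in>{..<q0}. a q * y powr of_rat q) = (\<Sum>\<^sub>\<infinity>q\<in>{..<q0}. b q * y powr of_rat q)" for y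
    using assms(3) by (intro infsum_cong) auto
  show ?thesis
    unfolding arc_less_iff_eventually
    using puiseux_eval_leading_terms[OF assms(1) \<open>\<epsilon> > 0\<close>, of q0]
      puiseux_eval_leading_terms[OF assms(2) \<open>\<epsilon> > 0\<close>, of q0] eventually_at_right_less[of "0::real"]
  proof eventually_elim
    case (elim y)
    define u where "u = y powr of_rat q0"
    have "\<epsilon> * u > 0"
      using \<open>\<epsilon> > 0\<close> elim(3) by (simp add: u_def)
    moreover have "3 * (\<epsilon> * u) = b q0 * u - a q0 * u"
      by (simp add: \<epsilon>_def field_simps)
    ultimately show ?case
      using elim(1,2) same_head[of y] unfolding u_def[symmetric] by linarith
  qed
qed

lemma common_denominator_has_least:
  fixes S :: "rat set"
  assumes "x \<in> S" "\<And>q. q \<in> S \<Longrightarrow> \<exists>k::nat. q = of_nat k / of_nat N" "N > 0"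
  obtains q0 where "q0 \<in> S" "\<And>q. q \<in> S \<Longrightarrow> q0 \<le> q"
proof
  define k0 where "k0 = (LEAST k::nat. of_nat k / of_nat N \<in> S)"
  obtain k :: nat where "x = of_nat k / of_nat N"
    using assms(1,2) by blast
  with assms(1) show "of_nat k0 / of_nat N \<in> S"
    unfolding k0_def by (metis LeastI)
  fix q assume "q \<in> S"
  then obtain j :: nat where j: "q = of_nat j / of_nat N"
    using assms(2) by blast
  with \<open>q \<in> S\<close> have "k0 \<le> j"
    unfolding k0_def by (simp add: Least_le)
  with j assms(3) show "of_nat k0 / of_nat N \<le> q"
    by (simp add: divide_right_mono)
qed

lemma puiseux_first_difference:
  assumes "is_puiseux a" "is_puiseux b" "a \<noteq> b"
  obtains q0 where "a q0 \<noteq> b q0" "\<And>q. q < q0 \<Longrightarrow> a q = b q"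
proof -
  obtain Na Nb where dena: "puiseux_den a Na" and denb: "puiseux_den b Nb"
    using assms(1,2) unfolding is_puiseux_def by blast
  then have "Na > 0" "Nb > 0"
    unfolding puiseux_den_def by auto
  have "\<exists>k::nat. q = of_nat k / of_nat (Na * Nb)" if "a q \<noteq> b q" for q
  proof (cases "a q = 0")
    case True
    with that obtain k :: nat where "q = of_nat k / of_nat Nb"
      using puiseux_den_support(2)[OF denb] by auto
    then have "q = of_nat (k * Na) / of_nat (Na * Nb)"
      using \<open>Na > 0\<close> by simp
    then show ?thesis ..
  next
    case False
    then obtain k :: nat where "q = of_nat k / of_nat Na"
      using puiseux_den_support(2)[OF dena] by auto
    then have "q = of_nat (k * Nb) / of_nat (Na * Nb)"
      using \<open>Nb > 0\<close> by simp
    then show ?thesis ..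
  qed
  moreover obtain x where "a x \<noteq> b x"
    using assms(3) by auto
  ultimately obtain q0 where "a q0 \<noteq> b q0" "\<And>q. a q \<noteq> b q \<Longrightarrow> q0 \<le> q"
    using common_denominator_has_least[of x "{q. a q \<noteq> b q}" "Na * Nb"] \<open>Na > 0\<close> \<open>Nb > 0\<close>
    by auto
  then show ?thesis
    using that by (meson not_le)
qed

lemma puiseux_order_eq_first_nonzero:
  assumes "e q0 \<noteq> 0" "\<And>q. q < q0 \<Longrightarrow> e q = 0"
  shows "puiseux_order e = of_rat q0"
  unfolding puiseux_order_def
  by (rule cInf_eq_minimum) (use assms in \<open>auto simp: of_rat_less_eq of_rat_less not_less[symmetric]\<close>)

lemma arc_dist_first_difference:
  assumes "a q0 \<noteq> b q0" "\<And>q. q < q0 \<Longrightarrow> a q = b q"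
  shows "arc_dist a b = 1 / of_rat q0"
  using assms puiseux_order_eq_first_nonzero[of "\<lambda>q. a q - b q" q0]
  by (auto simp: arc_dist_def)

lemma zone_mem_is_puiseux:
  assumes "is_zone A" "a \<in> A"
  shows "is_puiseux a"
  using assms unfolding is_zone_def arcs_def by blast

lemma closed_zone_extremal_pair:
  assumes "closed_zone A" "zone_width A = ereal w" "w > 0"
  obtains a b q0 where "a \<in> A" "b \<in> A" "of_rat q0 = 1 / w"
    "\<And>q. q < q0 \<Longrightarrow> a q = b q" "a q0 < b q0"
proof -
  obtain a b where ab: "a \<in> A" "b \<in> A" "arc_dist a b = w"
    using assms(1,2) unfolding closed_zone_def by auto
  have "is_puiseux a" "is_puiseux b"
    using assms(1) ab zone_mem_is_puiseux unfolding closed_zone_def by blast+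
  moreover have "a \<noteq> b"
    using ab(3) assms(3) by (auto simp: arc_dist_def)
  ultimately obtain q0 where ne: "a q0 \<noteq> b q0" and eq: "\<And>q. q < q0 \<Longrightarrow> a q = b q"
    using puiseux_first_difference by blast
  have "of_rat q0 = 1 / w"
    using arc_dist_first_difference[of a q0 b, OF ne eq] ab(3) by simp
  from ne consider "a q0 < b q0" | "b q0 < a q0"
    by linarith
  then show ?thesis
    by cases (use that ab \<open>of_rat q0 = 1 / w\<close> eq in \<open>metis\<close>)+
qed

lemma zone_mem_if_first_difference_between:
  assumes "is_zone A" "a \<in> A" "b \<in> A" "g \<in> arcs"
    and "\<And>q. q < q0 \<Longrightarrow> a q = g q" "\<And>q. q < q0 \<Longrightarrow> g q = b q"
    and "a q0 < g q0" "g q0 < b q0"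
  shows "g \<in> A"
proof -
  have "is_puiseux a" "is_puiseux b" "is_puiseux g"
    using assms(1-4) zone_mem_is_puiseux by (auto simp: arcs_def)
  then have "arc_less a g" "arc_less g b"
    by (auto intro: arc_less_if_first_difference_less assms(5-8))
  with assms(1-4) show ?thesis
    unfolding is_zone_def by blast
qed

theorem lemma5p2:
  fixes A :: "(rat \<Rightarrow> real) set" and w :: real
  assumes "closed_zone A"
    and "zone_width A = ereal w"
    and "w > 0"
  shows "\<exists>(p :: rat \<Rightarrow> real) (q0 :: rat) (c1 :: real) (c2 :: real) \<alpha>1 \<alpha>2.
           finite {q. p q \<noteq> 0} \<and>
           (\<forall>q. p q \<noteq> 0 \<longrightarrow> 0 < q \<and> of_rat q < 1 / w) \<and>
           of_rat q0 = 1 / w \<and>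
           c1 < c2 \<and>
           \<alpha>1 \<in> A \<and> (\<forall>q. of_rat q < 1 / w \<longrightarrow> \<alpha>1 q = p q) \<and> \<alpha>1 q0 = c1 \<and>
           \<alpha>2 \<in> A \<and> (\<forall>q. of_rat q < 1 / w \<longrightarrow> \<alpha>2 q = p q) \<and> \<alpha>2 q0 = c2 \<and>
           (\<forall>c \<alpha>. c1 < c \<and> c < c2 \<and> \<alpha> \<in> arcs \<and>
               (\<forall>q. of_rat q < 1 / w \<longrightarrow> \<alpha> q = p q) \<and> \<alpha> q0 = c \<longrightarrow> \<alpha> \<in> A)"
proof -
  obtain a b q0 where ab: "a \<in> A" "b \<in> A" and q0: "of_rat q0 = 1 / w"
    and eq: "\<And>q. q < q0 \<Longrightarrow> a q = b q" and less: "a q0 < b q0"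
    using closed_zone_extremal_pair[OF assms] by blast
  have below_iff: "of_rat q < 1 / w \<longleftrightarrow> q < q0" for q
    unfolding q0[symmetric] by (rule of_rat_less)
  define p where "p q = (if q < q0 then a q else 0)" for q
  have "is_puiseux a"
    using assms(1) ab(1) zone_mem_is_puiseux unfolding closed_zone_def by blast
  moreover have "{q. p q \<noteq> 0} = {q. a q \<noteq> 0 \<and> q < q0}"
    by (auto simp: p_def)
  ultimately have "finite {q. p q \<noteq> 0}"
    using puiseux_finite_support_below by metis
  moreover have "\<forall>q. p q \<noteq> 0 \<longrightarrow> 0 < q \<and> of_rat q < 1 / w"
    using \<open>is_puiseux a\<close> below_iff
    by (auto simp: p_def is_puiseux_def dest: puiseux_den_support(1))
  moreover have "g \<in> A"
    if "a q0 < c" "c < b q0" "g \<in> arcs" "\<forall>q. of_rat q < 1 / w \<longrightarrow> g q = p q" "g q0 = c" for c g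
    using assms(1) ab that eq unfolding closed_zone_def
    by (intro zone_mem_if_first_difference_between[of A a b g q0]) (auto simp: below_iff p_def)
  ultimately show ?thesis
    using q0 less ab eq
    by (intro exI[of _ p] exI[of _ q0] exI[of _ "a q0"] exI[of _ "b q0"] exI[of _ a] exI[of _ b])
      (auto simp: below_iff p_def)
qed

end
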